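(* Let $N$ be a nested set of separations of a connected locally finite graph $G$, let $((A_i,B_i))_{i\in\mathbb N}$ be a strictly increasing sequence of orientations of separations in $N$ whose underlying separations are tight, and let $(A,B)=(\bigcup_iA_i,\bigcap_iB_i)$. If the sequence is non-exhaustive (i.e. $B\ne\emptyset$) and $N$ distinguishes all pre-tangles in $G$ induced by ends of $G$ lying in the closure of $A\cap B$, then exactly one end of $G$ lies in the closure of $A\cap B$.
   Context: A separation of $G$ is an unordered pair $\{A,B\}$ of subsets of $V(G)$ with $A\cup B=V(G)$ and no edge between $A\setminus B$ and $B\setminus A$; order $|A\cap B|$. Oriented separations are ordered by $(A,B)\le(C,D)$ iff $A\subseteq C$ and $B\supseteq D$; nested means some orientations are comparable. For $X\subseteq V(G)$, a component $K$ of $G-X$ is tight if $N_G(K)=X$; a separation $\{A,B\}$ is tight if both $A\setminus B$ and $B\setminus A$ contain the vertex set of a tight component of $G-(A\cap B)$. A pre-tangle is a consistent set $P$ of oriented separations (no $(A,B),(C,D)\in P$ with $\{A,B\}\ne\{C,D\}$ and $(B,A)\le(C,D)$) containing, for some $k\in\mathbb N\cup\{\aleph_0\}$, exactly one orientation of every separation of order $<k$ and nothing else. A separation distinguishes two pre-tangles if both orient it, differently; $N$ distinguishes a set of pre-tangles if any two of them distinguished by some separation are distinguished by an element of $N$. An end is an equivalence class of rays; the pre-tangle $P_\omega$ induced by an end $\omega$ contains, for every finite-order separation $\{A,B\}$, the orientation $(A,B)$ such that rays of $\omega$ have cofinitely many vertices in $B\setminus A$. A comb is a ray (spine) together with infinitely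 many disjoint finite paths meeting it exactly in their first vertex; their last vertices are the teeth. An end $\omega$ lies in the closure of $U\subseteq V(G)$ if there is a comb with teeth in $U$ whose spine is in $\omega$. *)

theory Defs
  imports Main "HOL-Library.Uprod" "HOL-Library.Extended_Nat"
begin

definition graph :: "'a set \<Rightarrow> ('a \<Rightarrow> 'a \<Rightarrow> bool) \<Rightarrow> bool" where
  "graph V E \<longleftrightarrow> (\<forall>x y. E x y \<longrightarrow> x \<in> V \<and> y \<in> V \<and> x \<noteq> y \<and> E y x)"

definition locally_finite :: "'a set \<Rightarrow> ('a \<Rightarrow> 'a \<Rightarrow> bool) \<Rightarrow> bool" where
  "locally_finite V E \<longleftrightarrow> (\<forall>v\<in>V. finite {u. E v u})"

definition conn_in :: "('a \<Rightarrow> 'a \<Rightarrow> bool) \<Rightarrow> 'a set \<Rightarrow> 'a \<Rightarrow> 'a \<Rightarrow> bool" where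
  "conn_in E S x y \<longleftrightarrow> x \<in> S \<and> (\<lambda>u v. E u v \<and> u \<in> S \<and> v \<in> S)\<^sup>*\<^sup>* x y"

definition connected_graph :: "'a set \<Rightarrow> ('a \<Rightarrow> 'a \<Rightarrow> bool) \<Rightarrow> bool" where
  "connected_graph V E \<longleftrightarrow> V \<noteq> {} \<and> (\<forall>x\<in>V. \<forall>y\<in>V. conn_in E V x y)"

definition is_sep :: "'a set \<Rightarrow> ('a \<Rightarrow> 'a \<Rightarrow> bool) \<Rightarrow> 'a set \<Rightarrow> 'a set \<Rightarrow> bool" where
  "is_sep V E A B \<longleftrightarrow> A \<union> B = V \<and> (\<forall>x\<in>A - B. \<forall>y\<in>B - A. \<not> E x y)"

definition separation :: "'a set \<Rightarrow> ('a \<Rightarrow> 'a \<Rightarrow> bool) \<Rightarrow> 'a set uprod \<Rightarrow> bool" where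
  "separation V E s \<longleftrightarrow> (\<exists>A B. s = Upair A B \<and> is_sep V E A B)"

definition sep_order :: "'a set \<Rightarrow> 'a set \<Rightarrow> enat" where
  "sep_order A B = (if finite (A \<inter> B) then enat (card (A \<inter> B)) else \<infinity>)"

definition orientations :: "'a set uprod \<Rightarrow> ('a set \<times> 'a set) set" where
  "orientations s = {(A, B). s = Upair A B}"

definition sep_le :: "'a set \<times> 'a set \<Rightarrow> 'a set \<times> 'a set \<Rightarrow> bool" where
  "sep_le p q \<longleftrightarrow> fst p \<subseteq> fst q \<and> snd q \<subseteq> snd p"

definition nested :: "'a set uprod \<Rightarrow> 'a set uprod \<Rightarrow> bool" where
  "nested s t \<longleftrightarrow> (\<exists>p\<in>orientations s. \<exists>q\<in>orientations t. sep_le p q)"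

definition nested_set :: "'a set uprod set \<Rightarrow> bool" where
  "nested_set N \<longleftrightarrow> (\<forall>s\<in>N. \<forall>t\<in>N. nested s t)"

definition component :: "'a set \<Rightarrow> ('a \<Rightarrow> 'a \<Rightarrow> bool) \<Rightarrow> 'a set \<Rightarrow> 'a set \<Rightarrow> bool" where
  "component V E X K \<longleftrightarrow> (\<exists>x\<in>V - X. K = {y. conn_in E (V - X) x y})"

definition nbhd :: "'a set \<Rightarrow> ('a \<Rightarrow> 'a \<Rightarrow> bool) \<Rightarrow> 'a set \<Rightarrow> 'a set" where
  "nbhd V E K = {v \<in> V - K. \<exists>u\<in>K. E u v}"

definition tight_component :: "'a set \<Rightarrow> ('a \<Rightarrow> 'a \<Rightarrow> bool) \<Rightarrow> 'a set \<Rightarrow> 'a set \<Rightarrow> bool" where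
  "tight_component V E X K \<longleftrightarrow> component V E X K \<and> nbhd V E K = X"

definition tight_sep :: "'a set \<Rightarrow> ('a \<Rightarrow> 'a \<Rightarrow> bool) \<Rightarrow> 'a set uprod \<Rightarrow> bool" where
  "tight_sep V E s \<longleftrightarrow> (\<exists>A B. s = Upair A B \<and> is_sep V E A B \<and>
      (\<exists>K. tight_component V E (A \<inter> B) K \<and> K \<subseteq> A - B) \<and>
      (\<exists>K. tight_component V E (A \<inter> B) K \<and> K \<subseteq> B - A))"

definition consistent :: "('a set \<times> 'a set) set \<Rightarrow> bool" where
  "consistent P \<longleftrightarrow> \<not> (\<exists>A B C D. (A, B) \<in> P \<and> (C, D) \<in> P \<and> Upair A B \<noteq> Upair C D
        \<and> sep_le (B, A) (C, D))"

definition pre_tangle :: "'a set \<Rightarrow> ('a \<Rightarrow> 'a \<Rightarrow> bool) \<Rightarrow> ('a set \<times> 'a set) set \<Rightarrow> bool" where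
  "pre_tangle V E P \<longleftrightarrow> consistent P \<and> (\<exists>k::enat.
      (\<forall>A B. is_sep V E A B \<and> sep_order A B < k \<longrightarrow> card (P \<inter> {(A, B), (B, A)}) = 1) \<and>
      (\<forall>(A, B)\<in>P. is_sep V E A B \<and> sep_order A B < k))"

definition distinguishes :: "'a set uprod \<Rightarrow> ('a set \<times> 'a set) set \<Rightarrow> ('a set \<times> 'a set) set \<Rightarrow> bool" where
  "distinguishes s P1 P2 \<longleftrightarrow> P1 \<inter> orientations s \<noteq> {} \<and> P2 \<inter> orientations s \<noteq> {}
      \<and> P1 \<inter> orientations s \<noteq> P2 \<inter> orientations s"

definition distinguishes_set :: "'a set \<Rightarrow> ('a \<Rightarrow> 'a \<Rightarrow> bool) \<Rightarrow> 'a set uprod set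
      \<Rightarrow> ('a set \<times> 'a set) set set \<Rightarrow> bool" where
  "distinguishes_set V E N T \<longleftrightarrow> (\<forall>P1\<in>T. \<forall>P2\<in>T.
      (\<exists>s. separation V E s \<and> distinguishes s P1 P2) \<longrightarrow> (\<exists>s\<in>N. distinguishes s P1 P2))"

definition is_ray :: "'a set \<Rightarrow> ('a \<Rightarrow> 'a \<Rightarrow> bool) \<Rightarrow> (nat \<Rightarrow> 'a) \<Rightarrow> bool" where
  "is_ray V E r \<longleftrightarrow> inj r \<and> (\<forall>n. r n \<in> V \<and> E (r n) (r (Suc n)))"

(* two rays are equivalent if no finite vertex set separates them, i.e. for every finite S
   they have tails in the same component of G - S *)
definition ray_equiv :: "'a set \<Rightarrow> ('a \<Rightarrow> 'a \<Rightarrow> bool) \<Rightarrow> (nat \<Rightarrow> 'a) \<Rightarrow> (nat \<Rightarrow> 'a) \<Rightarrow> bool" where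
  "ray_equiv V E r1 r2 \<longleftrightarrow> (\<forall>S. finite S \<longrightarrow> (\<exists>m n. (\<forall>i\<ge>m. r1 i \<notin> S) \<and> (\<forall>j\<ge>n. r2 j \<notin> S)
       \<and> conn_in E (V - S) (r1 m) (r2 n)))"

definition is_end :: "'a set \<Rightarrow> ('a \<Rightarrow> 'a \<Rightarrow> bool) \<Rightarrow> (nat \<Rightarrow> 'a) set \<Rightarrow> bool" where
  "is_end V E \<omega> \<longleftrightarrow> (\<exists>r. is_ray V E r \<and> \<omega> = {r'. is_ray V E r' \<and> ray_equiv V E r r'})"

definition end_pre_tangle :: "'a set \<Rightarrow> ('a \<Rightarrow> 'a \<Rightarrow> bool) \<Rightarrow> (nat \<Rightarrow> 'a) set
      \<Rightarrow> ('a set \<times> 'a set) set" where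
  "end_pre_tangle V E \<omega> = {(A, B). is_sep V E A B \<and> finite (A \<inter> B) \<and>
      (\<forall>r\<in>\<omega>. finite {n. r n \<notin> B - A})}"

definition is_path :: "'a set \<Rightarrow> ('a \<Rightarrow> 'a \<Rightarrow> bool) \<Rightarrow> 'a list \<Rightarrow> bool" where
  "is_path V E p \<longleftrightarrow> p \<noteq> [] \<and> distinct p \<and> set p \<subseteq> V \<and> successively E p"

(* a comb with spine r, paths P i (starting on the spine) and teeth last (P i) in U *)
definition is_comb :: "'a set \<Rightarrow> ('a \<Rightarrow> 'a \<Rightarrow> bool) \<Rightarrow> (nat \<Rightarrow> 'a) \<Rightarrow> (nat \<Rightarrow> 'a list) \<Rightarrow> bool" where
  "is_comb V E r P \<longleftrightarrow> is_ray V E r \<and>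
     (\<forall>i. is_path V E (P i) \<and> set (P i) \<inter> range r = {hd (P i)}) \<and>
     (\<forall>i j. i \<noteq> j \<longrightarrow> set (P i) \<inter> set (P j) = {})"

definition end_in_closure :: "'a set \<Rightarrow> ('a \<Rightarrow> 'a \<Rightarrow> bool) \<Rightarrow> (nat \<Rightarrow> 'a) set \<Rightarrow> 'a set \<Rightarrow> bool" where
  "end_in_closure V E \<omega> U \<longleftrightarrow> (\<exists>r P. is_comb V E r P \<and> r \<in> \<omega> \<and> (\<forall>i. last (P i) \<in> U))"

end

theory Submission
  imports Defs
begin

text \<open>If \<open>A \<inter> B\<close> were finite, then \<open>A \<inter> B \<subseteq> A\<^sub>i \<inter> B\<^sub>i\<close> for large \<open>i\<close>, and a
  fixed \<open>x \<in> A \<inter> B\<close> has a neighbour in the tight component of \<open>G - (A\<^sub>i \<inter> B\<^sub>i)\<close> inside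
  \<open>B\<^sub>i - A\<^sub>i\<close>. By local finiteness one neighbour \<open>w\<close> serves infinitely many \<open>i\<close>; as \<open>w \<in> B - A\<close>,
  all these separations have separator exactly \<open>A \<inter> B\<close>. But a connected locally finite graph has
  only finitely many separations with a given finite separator, while the \<open>(A\<^sub>i, B\<^sub>i)\<close> are
  distinct. So \<open>A \<inter> B\<close> is infinite, and Koenig's lemma in a breadth-first spanning tree yields a
  comb with teeth in \<open>A \<inter> B\<close>.

  Two distinct ends in the closure of \<open>A \<inter> B\<close> are distinguished by a separation in
  \<open>N\<close>; each end has teeth in \<open>A \<inter> B\<close> strictly on its own side. Those two teeth lie in the
  separator of a single \<open>(A\<^sub>i, B\<^sub>i) \<in> N\<close>, which contradicts nestedness.\<close>

section \<open>Connectivity in induced subgraphs\<close>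

lemma graph_edge_sym: "graph V E \<Longrightarrow> E x y \<Longrightarrow> E y x"
  unfolding graph_def by blast

lemma graph_edge_in_V: "graph V E \<Longrightarrow> E x y \<Longrightarrow> x \<in> V \<and> y \<in> V"
  unfolding graph_def by blast

lemma is_sep_swap: "graph V E \<Longrightarrow> is_sep V E A B \<Longrightarrow> is_sep V E B A"
  unfolding is_sep_def graph_def by blast

lemma conn_in_mem:
  assumes "conn_in E S x y"
  shows "x \<in> S \<and> y \<in> S"
proof -
  have "(\<lambda>u v. E u v \<and> u \<in> S \<and> v \<in> S)\<^sup>*\<^sup>* x y" and "x \<in> S"
    using assms unfolding conn_in_def by auto
  then show ?thesis by (induction rule: rtranclp_induct) auto
qed

lemma conn_in_refl: "x \<in> S \<Longrightarrow> conn_in E S x x"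
  unfolding conn_in_def by auto

lemma conn_in_edge: "E x y \<Longrightarrow> x \<in> S \<Longrightarrow> y \<in> S \<Longrightarrow> conn_in E S x y"
  unfolding conn_in_def by (auto intro: r_into_rtranclp)

lemma conn_in_trans: "conn_in E S x y \<Longrightarrow> conn_in E S y z \<Longrightarrow> conn_in E S x z"
  unfolding conn_in_def by (auto intro: rtranclp_trans)

lemma conn_in_sym:
  assumes "graph V E" and "conn_in E S x y"
  shows "conn_in E S y x"
proof -
  have "symp (\<lambda>u v. E u v \<and> u \<in> S \<and> v \<in> S)"
    using graph_edge_sym[OF assms(1)] by (auto intro: sympI)
  then have "symp (\<lambda>u v. E u v \<and> u \<in> S \<and> v \<in> S)\<^sup>*\<^sup>*"
    by (rule symp_rtranclp)
  then show ?thesis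
    using assms(2) conn_in_mem[OF assms(2)] unfolding conn_in_def by (simp add: sympD)
qed

lemma conn_in_mono:
  assumes "conn_in E S x y" and "S \<subseteq> T"
  shows "conn_in E T x y"
proof -
  have "(\<lambda>u v. E u v \<and> u \<in> S \<and> v \<in> S)\<^sup>*\<^sup>* x y"
    using assms(1) unfolding conn_in_def by auto
  then have "(\<lambda>u v. E u v \<and> u \<in> T \<and> v \<in> T)\<^sup>*\<^sup>* x y"
    by (induction rule: rtranclp_induct) (use assms(2) in \<open>auto intro: rtranclp.rtrancl_into_rtrancl\<close>)
  then show ?thesis
    using assms unfolding conn_in_def by auto
qed

lemma conn_in_path:
  assumes "successively E xs" and "set xs \<subseteq> S" and "xs \<noteq> []" and "x \<in> set xs"
  shows "conn_in E S (hd xs) x"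
  using assms
proof (induction xs)
  case (Cons y ys)
  show ?case
  proof (cases "x = y")
    case False
    then have "ys \<noteq> []" and "x \<in> set ys" using Cons.prems by auto
    then have "conn_in E S (hd ys) x" and "E y (hd ys)"
      using Cons by (auto simp: successively_Cons)
    moreover have "hd ys \<in> S" using Cons.prems(2) \<open>ys \<noteq> []\<close> by auto
    ultimately show ?thesis
      using Cons.prems(2) by (auto intro: conn_in_trans conn_in_edge)
  qed (use Cons.prems in \<open>auto intro: conn_in_refl\<close>)
qed simp

lemma successively_upt:
  "(\<And>t. a \<le> t \<Longrightarrow> Suc t < b \<Longrightarrow> P t (Suc t)) \<Longrightarrow> successively P [a..<b]"
proof (induction "b - a" arbitrary: a)
  case (Suc x)
  then have "[a..<b] = a # [Suc a..<b]" by (simp add: upt_conv_Cons)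
  moreover have "successively P [Suc a..<b]" using Suc by auto
  ultimately show ?case
    using Suc.prems Suc.hyps(2) by (cases "Suc a < b") (auto simp: successively_Cons upt_conv_Cons)
qed simp

lemma conn_in_stays_on_side:
  assumes "is_sep V E A B" and "conn_in E (V - (A \<inter> B)) x y" and "x \<in> A - B"
  shows "y \<in> A - B"
proof -
  have "(\<lambda>u v. E u v \<and> u \<in> V - (A \<inter> B) \<and> v \<in> V - (A \<inter> B))\<^sup>*\<^sup>* x y"
    using assms(2) unfolding conn_in_def by auto
  then show ?thesis
    by (induction rule: rtranclp_induct) (use assms(1,3) in \<open>auto simp: is_sep_def\<close>)
qed

lemma conn_in_exit:
  assumes "conn_in E V v x" and "v \<notin> F" and "x \<in> F"
  shows "\<exists>t f. conn_in E (V - F) v t \<and> E t f \<and> f \<in> F"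
proof -
  have "(\<lambda>u w. E u w \<and> u \<in> V \<and> w \<in> V)\<^sup>*\<^sup>* v x" and "v \<in> V"
    using assms(1) unfolding conn_in_def by auto
  then have "conn_in E (V - F) v x \<or> (\<exists>t f. conn_in E (V - F) v t \<and> E t f \<and> f \<in> F)"
  proof (induction rule: rtranclp_induct)
    case base
    then show ?case using assms(2) by (blast intro: conn_in_refl)
  next
    case (step y z)
    show ?case
    proof (cases "conn_in E (V - F) v y")
      case True
      show ?thesis
      proof (cases "z \<in> F")
        case False
        then have "conn_in E (V - F) y z"
          using step(2) conn_in_mem[OF True] by (intro conn_in_edge) auto
        then show ?thesis using conn_in_trans[OF True] by blast
      qed (use True step.hyps(2) in blast)
    qed (use step.IH step.prems in blast)
  qed
  moreover have "\<not> conn_in E (V - F) v x" using assms(3) conn_in_mem[of E "V - F" v x] by blast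
  ultimately show ?thesis by blast
qed

lemma component_nonempty:
  assumes "component V E X K"
  shows "K \<noteq> {}"
proof -
  obtain x where "x \<in> V - X" "K = {y. conn_in E (V - X) x y}"
    using assms unfolding component_def by blast
  then have "x \<in> K" by (simp add: conn_in_refl)
  then show ?thesis by blast
qed

section \<open>Rays and ends\<close>

lemma ray_tail_conn_in:
  assumes "is_ray V E r" and "\<forall>i\<ge>n. r i \<notin> S" and "n \<le> k"
  shows "conn_in E (V - S) (r n) (r k)"
  using assms(3)
proof (induction k)
  case 0
  then show ?case using assms(1,2) by (auto intro: conn_in_refl simp: is_ray_def)
next
  case (Suc k)
  show ?case
  proof (cases "n = Suc k")
    case False
    then have "conn_in E (V - S) (r n) (r k)" and "n \<le> k" using Suc by auto
    moreover from \<open>n \<le> k\<close> have "conn_in E (V - S) (r k) (r (Suc k))"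
      using assms(1,2) by (intro conn_in_edge) (auto simp: is_ray_def)
    ultimately show ?thesis by (blast intro: conn_in_trans)
  qed (use assms(1,2) in \<open>auto intro: conn_in_refl simp: is_ray_def\<close>)
qed

lemma ray_tails_conn_in:
  assumes "graph V E" and "is_ray V E r" and "\<forall>i\<ge>n. r i \<notin> S" and "\<forall>i\<ge>m. r i \<notin> S"
  shows "conn_in E (V - S) (r n) (r m)"
proof (cases "n \<le> m")
  case True
  then show ?thesis using ray_tail_conn_in[OF assms(2,3)] by blast
next
  case False
  then show ?thesis using ray_tail_conn_in[OF assms(2,4), of n] conn_in_sym[OF assms(1)] by auto
qed

lemma ray_eventually_avoids:
  assumes "is_ray V E r" and "finite S"
  shows "\<exists>m. \<forall>i\<ge>m. r i \<notin> S"
proof -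
  have "finite (r -` S)" using assms by (auto simp: is_ray_def intro: finite_vimageI)
  then obtain m where "\<forall>i\<in>r -` S. i < m" by (meson finite_nat_set_iff_bounded)
  then show ?thesis by (meson leD vimageI)
qed

lemma ray_equiv_refl:
  assumes "is_ray V E r"
  shows "ray_equiv V E r r"
  unfolding ray_equiv_def
proof (intro allI impI)
  fix S :: "'a set" assume "finite S"
  then obtain m where m: "\<forall>i\<ge>m. r i \<notin> S" using ray_eventually_avoids assms by blast
  then have "conn_in E (V - S) (r m) (r m)"
    using assms by (auto intro: conn_in_refl simp: is_ray_def)
  then show "\<exists>m n. (\<forall>i\<ge>m. r i \<notin> S) \<and> (\<forall>j\<ge>n. r j \<notin> S) \<and> conn_in E (V - S) (r m) (r n)"
    using m by blast
qed

lemma ray_equiv_sym: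
  assumes "graph V E" and "ray_equiv V E r1 r2"
  shows "ray_equiv V E r2 r1"
  unfolding ray_equiv_def
proof (intro allI impI)
  fix S :: "'a set" assume "finite S"
  then obtain m n where "\<forall>i\<ge>m. r1 i \<notin> S" "\<forall>j\<ge>n. r2 j \<notin> S" "conn_in E (V - S) (r1 m) (r2 n)"
    using assms(2) unfolding ray_equiv_def by blast
  then show "\<exists>m n. (\<forall>i\<ge>m. r2 i \<notin> S) \<and> (\<forall>j\<ge>n. r1 j \<notin> S) \<and> conn_in E (V - S) (r2 m) (r1 n)"
    using conn_in_sym[OF assms(1)] by blast
qed

lemma ray_equiv_trans:
  assumes "graph V E" and "is_ray V E r2" and "ray_equiv V E r1 r2" and "ray_equiv V E r2 r3"
  shows "ray_equiv V E r1 r3"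
  unfolding ray_equiv_def
proof (intro allI impI)
  fix S :: "'a set" assume "finite S"
  then obtain m n where m: "\<forall>i\<ge>m. r1 i \<notin> S" and n: "\<forall>j\<ge>n. r2 j \<notin> S"
      and mn: "conn_in E (V - S) (r1 m) (r2 n)"
    using assms(3) unfolding ray_equiv_def by blast
  obtain n' p where n': "\<forall>i\<ge>n'. r2 i \<notin> S" and p: "\<forall>j\<ge>p. r3 j \<notin> S"
      and n'p: "conn_in E (V - S) (r2 n') (r3 p)"
    using assms(4) \<open>finite S\<close> unfolding ray_equiv_def by blast
  have "conn_in E (V - S) (r2 n) (r2 n')"
    using ray_tails_conn_in[OF assms(1,2) n n'] .
  then have "conn_in E (V - S) (r1 m) (r3 p)"
    using mn n'p by (blast intro: conn_in_trans)
  then show "\<exists>m n. (\<forall>i\<ge>m. r1 i \<notin> S) \<and> (\<forall>j\<ge>n. r3 j \<notin> S) \<and> conn_in E (V - S) (r1 m) (r3 n)"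
    using m p by blast
qed

lemma end_has_ray: "is_end V E \<omega> \<Longrightarrow> \<exists>r\<in>\<omega>. is_ray V E r"
  unfolding is_end_def using ray_equiv_refl by blast

section \<open>Combs in locally finite graphs\<close>

text \<open>A breadth-first spanning tree: \<open>parent v\<close> is a neighbour of \<open>v\<close> one level closer to the root.
  Since every vertex has only finitely many children, Koenig's lemma gives a ray from the root
  in the tree each of whose vertices has infinitely many vertices of \<open>U\<close> below it.\<close>

locale bfs_tree =
  fixes V :: "'a set" and E :: "'a \<Rightarrow> 'a \<Rightarrow> bool" and root :: 'a
  assumes g: "graph V E" and lf: "locally_finite V E" and cg: "connected_graph V E"
    and root_in_V: "root \<in> V"
begin

definition depth :: "'a \<Rightarrow> nat" where
  "depth v = (LEAST n. (E ^^ n) root v)"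

lemma restricted_adjacency_eq: "(\<lambda>u v. E u v \<and> u \<in> V \<and> v \<in> V) = E"
  using g unfolding graph_def by (intro ext) blast

lemma reachable_by_walk: "v \<in> V \<Longrightarrow> \<exists>n. (E ^^ n) root v"
  using cg root_in_V unfolding connected_graph_def conn_in_def restricted_adjacency_eq
  by (auto intro: rtranclp_imp_relpowp)

lemma walk_of_depth: "v \<in> V \<Longrightarrow> (E ^^ depth v) root v"
  unfolding depth_def using reachable_by_walk by (metis LeastI_ex)

lemma depth_le_walk: "(E ^^ n) root v \<Longrightarrow> depth v \<le> n"
  unfolding depth_def by (rule Least_le)

lemma depth_root: "depth root = 0"
  using depth_le_walk[of 0 root] by simp

lemma depth_eq_0_imp_root: "v \<in> V \<Longrightarrow> depth v = 0 \<Longrightarrow> v = root"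
  using walk_of_depth[of v] by simp

lemma depth_edge_le:
  assumes "E u v"
  shows "depth v \<le> depth u + 1"
proof -
  have "u \<in> V" using graph_edge_in_V[OF g assms] by blast
  then have "(E ^^ Suc (depth u)) root v" using walk_of_depth assms by auto
  then show ?thesis using depth_le_walk by fastforce
qed

lemma exists_parent_candidate:
  assumes "v \<in> V" and "v \<noteq> root"
  shows "\<exists>u. E v u \<and> depth u + 1 = depth v"
proof -
  have "depth v \<noteq> 0" using depth_eq_0_imp_root assms by blast
  then obtain k where k: "depth v = Suc k" by (cases "depth v") auto
  then have "(E ^^ Suc k) root v" using walk_of_depth assms by metis
  then obtain u where u: "(E ^^ k) root u" "E u v" by auto
  have "depth u \<le> k" using depth_le_walk u by blast
  moreover have "depth v \<le> depth u + 1" using depth_edge_le u by blast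
  ultimately have "depth u + 1 = depth v" using k by simp
  then show ?thesis using u graph_edge_sym[OF g] by blast
qed

definition parent :: "'a \<Rightarrow> 'a" where
  "parent v = (if v = root then root else SOME u. E v u \<and> depth u + 1 = depth v)"

lemma parent_root [simp]: "parent root = root"
  unfolding parent_def by simp

lemma parent_edge_depth:
  assumes "v \<in> V" and "v \<noteq> root"
  shows "E v (parent v) \<and> depth (parent v) + 1 = depth v"
  using someI_ex[OF exists_parent_candidate[OF assms]] assms unfolding parent_def by simp

lemma parent_in_V: "v \<in> V \<Longrightarrow> parent v \<in> V"
  using parent_edge_depth graph_edge_in_V[OF g] root_in_V by (cases "v = root") auto

lemma depth_parent:
  assumes "v \<in> V"
  shows "depth (parent v) = depth v - 1"
proof (cases "v = root")
  case True
  then show ?thesis by (simp add: depth_root)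
next
  case False
  then show ?thesis using parent_edge_depth[of v] assms by fastforce
qed

lemma iter_parent_in_V: "v \<in> V \<Longrightarrow> (parent ^^ n) v \<in> V"
  by (induction n) (auto simp: parent_in_V)

lemma depth_iter_parent: "v \<in> V \<Longrightarrow> depth ((parent ^^ n) v) = depth v - n"
  by (induction n) (auto simp: depth_parent iter_parent_in_V)

lemma iter_parent_eq_if_depth_eq:
  assumes "u \<in> V" and "depth ((parent ^^ a) u) = depth ((parent ^^ b) u)"
  shows "(parent ^^ a) u = (parent ^^ b) u"
proof (cases "a = b")
  case False
  then have "depth u - a = 0" "depth u - b = 0" using assms depth_iter_parent by auto
  then show ?thesis using depth_eq_0_imp_root iter_parent_in_V depth_iter_parent assms by metis
qed simp

context
  fixes U :: "'a set"
  assumes UV: "U \<subseteq> V" and Uinf: "infinite U"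
begin

definition below :: "'a \<Rightarrow> 'a set" where
  "below v = {u \<in> U. \<exists>n. (parent ^^ n) u = v}"

lemma below_in_V: "u \<in> below v \<Longrightarrow> u \<in> V"
  using UV unfolding below_def by blast

lemma below_root: "below root = U"
proof -
  have "(parent ^^ depth u) u = root" if "u \<in> U" for u
    using that UV depth_iter_parent[of u "depth u"] iter_parent_in_V depth_eq_0_imp_root by auto
  then show ?thesis unfolding below_def by blast
qed

lemma iter_parent_child:
  "(parent ^^ n) u = v \<Longrightarrow> u = v \<or> (\<exists>c. parent c = v \<and> c \<noteq> v \<and> (\<exists>m. (parent ^^ m) u = c))"
proof (induction n)
  case (Suc n)
  show ?case
  proof (cases "(parent ^^ n) u = v")
    case True
    then show ?thesis using Suc by blast
  next
    case False
    then show ?thesis using Suc.prems by auto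
  qed
qed simp

lemma infinite_below_child:
  assumes "v \<in> V" and "infinite (below v)"
  shows "\<exists>c. E v c \<and> parent c = v \<and> c \<noteq> v \<and> infinite (below c)"
proof (rule ccontr)
  assume no_child: "\<not> ?thesis"
  let ?C = "{c. E v c \<and> parent c = v \<and> c \<noteq> v}"
  have "finite ?C" using lf assms(1) unfolding locally_finite_def by (auto intro: finite_subset)
  have "below v \<subseteq> {v} \<union> (\<Union>c\<in>?C. below c)"
  proof
    fix u assume "u \<in> below v"
    then obtain n where n: "(parent ^^ n) u = v" "u \<in> U" unfolding below_def by blast
    show "u \<in> {v} \<union> (\<Union>c\<in>?C. below c)"
    proof (cases "u = v")
      case False
      then obtain c m where c: "parent c = v" "c \<noteq> v" "(parent ^^ m) u = c"
        using iter_parent_child[OF n(1)] by blast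
      have "c \<in> V" using c(3) iter_parent_in_V n(2) UV by blast
      moreover have "c \<noteq> root" using c by auto
      ultimately have "E c v" using parent_edge_depth c by blast
      then have "E v c" using graph_edge_sym[OF g] by blast
      then show ?thesis using c n(2) unfolding below_def by blast
    qed simp
  qed
  moreover have "finite ({v} \<union> (\<Union>c\<in>?C. below c))" using \<open>finite ?C\<close> no_child by auto
  ultimately show False using assms(2) finite_subset by blast
qed

definition heavy_child :: "'a \<Rightarrow> 'a" where
  "heavy_child v = (SOME c. E v c \<and> parent c = v \<and> c \<noteq> v \<and> infinite (below c))"

lemma heavy_child:
  assumes "v \<in> V" and "infinite (below v)"
  shows "E v (heavy_child v) \<and> parent (heavy_child v) = v \<and> heavy_child v \<noteq> v
    \<and> infinite (below (heavy_child v))"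
  using someI_ex[OF infinite_below_child[OF assms]] unfolding heavy_child_def by blast

primrec spine :: "nat \<Rightarrow> 'a" where
  "spine 0 = root"
| "spine (Suc k) = heavy_child (spine k)"

lemma spine_invariant: "spine k \<in> V \<and> infinite (below (spine k)) \<and> depth (spine k) = k"
proof (induction k)
  case 0
  then show ?case using root_in_V below_root Uinf depth_root by simp
next
  case (Suc k)
  then have child: "E (spine k) (spine (Suc k))" "parent (spine (Suc k)) = spine k"
      "spine (Suc k) \<noteq> spine k" "infinite (below (spine (Suc k)))"
    using heavy_child[of "spine k"] by simp_all
  then have "spine (Suc k) \<in> V" using graph_edge_in_V[OF g] by blast
  moreover have "spine (Suc k) \<noteq> root" using child(2,3) by auto
  ultimately have "depth (parent (spine (Suc k))) + 1 = depth (spine (Suc k))"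
    using parent_edge_depth by blast
  moreover have "depth (parent (spine (Suc k))) = k" using child(2) Suc by simp
  ultimately have "depth (spine (Suc k)) = Suc k" by linarith
  then show ?case using child(4) \<open>spine (Suc k) \<in> V\<close> by blast
qed

lemma spine_is_ray: "is_ray V E spine"
  unfolding is_ray_def
proof (intro conjI allI)
  show "inj spine"
  proof (rule injI)
    fix x y assume "spine x = spine y"
    moreover have "depth (spine x) = x" "depth (spine y) = y" using spine_invariant by blast+
    ultimately show "x = y" by metis
  qed
  fix k
  have "spine k \<in> V" "infinite (below (spine k))" using spine_invariant[of k] by blast+
  then show "spine k \<in> V" "E (spine k) (spine (Suc k))" using heavy_child by auto
qed

definition ancestor :: "nat \<Rightarrow> 'a \<Rightarrow> 'a" where
  "ancestor t u = (parent ^^ (depth u - t)) u"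

lemma ancestor_in_V: "u \<in> V \<Longrightarrow> ancestor t u \<in> V"
  unfolding ancestor_def by (rule iter_parent_in_V)

lemma depth_ancestor: "u \<in> V \<Longrightarrow> t \<le> depth u \<Longrightarrow> depth (ancestor t u) = t"
  unfolding ancestor_def by (simp add: depth_iter_parent)

lemma ancestor_depth_self: "ancestor (depth u) u = u"
  unfolding ancestor_def by simp

lemma ancestor_edge:
  assumes "u \<in> V" and "t < depth u"
  shows "E (ancestor t u) (ancestor (Suc t) u)"
proof -
  have eq: "ancestor t u = parent (ancestor (Suc t) u)"
    unfolding ancestor_def using assms(2) by (metis Suc_diff_Suc comp_apply funpow.simps(2))
  have "ancestor (Suc t) u \<noteq> root"
    using depth_ancestor[OF assms(1), of "Suc t"] assms depth_root by auto
  then have "E (ancestor (Suc t) u) (ancestor t u)"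
    using parent_edge_depth ancestor_in_V assms eq by auto
  then show ?thesis using graph_edge_sym[OF g] by blast
qed

lemma below_spine_ancestor:
  assumes "u \<in> below (spine k)"
  shows "k \<le> depth u" and "ancestor k u = spine k"
proof -
  obtain n where n: "(parent ^^ n) u = spine k" "u \<in> U" using assms unfolding below_def by blast
  have uV: "u \<in> V" using n UV by blast
  have "depth u - n = k" using depth_iter_parent[OF uV, of n] n spine_invariant by simp
  then show "k \<le> depth u" by simp
  have "depth (ancestor k u) = depth ((parent ^^ n) u)"
    using depth_ancestor[OF uV] \<open>depth u - n = k\<close> n spine_invariant by auto
  then show "ancestor k u = spine k"
    unfolding ancestor_def using iter_parent_eq_if_depth_eq[OF uV] n by metis
qed

definition ancestor_path :: "nat \<Rightarrow> 'a \<Rightarrow> 'a list" where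
  "ancestor_path j u = map (\<lambda>t. ancestor t u) [j..<Suc (depth u)]"

lemma set_ancestor_path: "set (ancestor_path j u) = (\<lambda>t. ancestor t u) ` {j..depth u}"
  unfolding ancestor_path_def by (simp del: upt_Suc add: atLeastLessThanSuc_atLeastAtMost)

lemma hd_ancestor_path: "j \<le> depth u \<Longrightarrow> hd (ancestor_path j u) = ancestor j u"
  unfolding ancestor_path_def by (simp del: upt_Suc add: upt_conv_Cons)

lemma last_ancestor_path: "j \<le> depth u \<Longrightarrow> last (ancestor_path j u) = u"
  unfolding ancestor_path_def by (simp add: last_map ancestor_depth_self del: upt_Suc)

lemma is_path_ancestor_path:
  assumes "u \<in> V" and "j \<le> depth u"
  shows "is_path V E (ancestor_path j u)"
  unfolding is_path_def
proof (intro conjI)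
  have "inj_on (\<lambda>t. ancestor t u) {j..<Suc (depth u)}"
  proof (rule inj_onI)
    fix x y assume "x \<in> {j..<Suc (depth u)}" "y \<in> {j..<Suc (depth u)}"
      and eq: "ancestor x u = ancestor y u"
    then have "x \<le> depth u" "y \<le> depth u" by auto
    then show "x = y" using depth_ancestor[OF assms(1)] eq by metis
  qed
  then show "distinct (ancestor_path j u)"
    unfolding ancestor_path_def by (simp add: distinct_map del: upt_Suc)
  show "successively E (ancestor_path j u)"
    unfolding ancestor_path_def successively_map
    by (rule successively_upt) (use ancestor_edge assms(1) in auto)
  show "ancestor_path j u \<noteq> []" unfolding ancestor_path_def using assms(2) by simp
  show "set (ancestor_path j u) \<subseteq> V" unfolding set_ancestor_path using ancestor_in_V assms(1) by blast
qed

text \<open>The tooth for \<open>u \<in> below (spine k)\<close> is the tree path to \<open>u\<close> from the deepest vertex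
  of depth \<open>\<ge> k\<close> that \<open>u\<close> shares with the spine.\<close>

definition branch_depth :: "nat \<Rightarrow> 'a \<Rightarrow> nat" where
  "branch_depth k u = Max {t. k \<le> t \<and> t \<le> depth u \<and> ancestor t u = spine t}"

definition tooth_path :: "nat \<Rightarrow> 'a \<Rightarrow> 'a list" where
  "tooth_path k u = ancestor_path (branch_depth k u) u"

lemma branch_depth:
  assumes "u \<in> below (spine k)"
  shows "k \<le> branch_depth k u" and "branch_depth k u \<le> depth u"
    and "ancestor (branch_depth k u) u = spine (branch_depth k u)"
    and "\<And>t. k \<le> t \<Longrightarrow> t \<le> depth u \<Longrightarrow> ancestor t u = spine t \<Longrightarrow> t \<le> branch_depth k u"
proof -
  let ?T = "{t. k \<le> t \<and> t \<le> depth u \<and> ancestor t u = spine t}"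
  have fin: "finite ?T" by (rule finite_subset[of _ "{..depth u}"]) auto
  have "k \<in> ?T" using below_spine_ancestor[OF assms] by simp
  then have "branch_depth k u \<in> ?T"
    unfolding branch_depth_def using Max_in[OF fin] by blast
  then show "k \<le> branch_depth k u" "branch_depth k u \<le> depth u"
    "ancestor (branch_depth k u) u = spine (branch_depth k u)"
    by auto
  show "t \<le> branch_depth k u" if "k \<le> t" "t \<le> depth u" "ancestor t u = spine t" for t
    unfolding branch_depth_def using Max_ge[OF fin] that by blast
qed

lemma tooth_path_meets_spine:
  assumes "u \<in> below (spine k)"
  shows "set (tooth_path k u) \<inter> range spine = {hd (tooth_path k u)}"
proof -
  let ?j = "branch_depth k u"
  have hd: "hd (tooth_path k u) = spine ?j"
    unfolding tooth_path_def using branch_depth(2,3)[OF assms] by (simp add: hd_ancestor_path)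
  have on_spine: "x = spine ?j" if x: "x \<in> set (tooth_path k u)" "x \<in> range spine" for x
  proof -
    obtain t where t: "?j \<le> t" "t \<le> depth u" "x = ancestor t u"
      using x(1) unfolding tooth_path_def set_ancestor_path by auto
    obtain t' where t': "x = spine t'" using x(2) by blast
    have "depth x = t" using t depth_ancestor[OF below_in_V[OF assms]] by simp
    moreover have "depth x = t'" using t' spine_invariant[of t'] by simp
    ultimately have "ancestor t u = spine t" using t(3) t' by simp
    moreover have "k \<le> t" using t(1) branch_depth(1)[OF assms] by linarith
    ultimately have "t \<le> ?j" using branch_depth(4)[OF assms _ t(2)] by blast
    then have "t = ?j" using t(1) by linarith
    then show ?thesis using t(3) branch_depth(3)[OF assms] by simp
  qed
  have "ancestor ?j u \<in> set (tooth_path k u)"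
    unfolding tooth_path_def set_ancestor_path using branch_depth(2)[OF assms] by simp
  then have "spine ?j \<in> set (tooth_path k u)" using branch_depth(3)[OF assms] by simp
  then show ?thesis unfolding hd using on_spine by blast
qed

lemma tooth_path_depths:
  assumes "u \<in> below (spine k)" and "x \<in> set (tooth_path k u)"
  shows "k \<le> depth x \<and> depth x \<le> depth u"
proof -
  obtain t where "branch_depth k u \<le> t" "t \<le> depth u" "x = ancestor t u"
    using assms(2) unfolding tooth_path_def set_ancestor_path by auto
  then show ?thesis
    using depth_ancestor[OF below_in_V[OF assms(1)]] branch_depth(1)[OF assms(1)] by auto
qed

definition tooth_target :: "nat \<Rightarrow> 'a" where
  "tooth_target k = (SOME u. u \<in> below (spine k))"

lemma tooth_target_below: "tooth_target k \<in> below (spine k)"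
proof -
  have "below (spine k) \<noteq> {}" using spine_invariant[of k] by (metis finite.emptyI)
  then show ?thesis unfolding tooth_target_def by (simp add: some_in_eq)
qed

text \<open>The \<open>n\<close>-th tooth hangs below \<open>spine (tooth_level n)\<close>, which lies deeper than every
  vertex of the previous tooth; so the teeth occupy disjoint ranges of depths.\<close>

primrec tooth_level :: "nat \<Rightarrow> nat" where
  "tooth_level 0 = 0"
| "tooth_level (Suc n) = Suc (depth (tooth_target (tooth_level n)))"

lemma tooth_level_less: "tooth_level n < tooth_level (Suc n)"
  using below_spine_ancestor(1)[OF tooth_target_below] by (simp add: le_imp_less_Suc)

lemma tooth_level_mono: "n < m \<Longrightarrow> tooth_level (Suc n) \<le> tooth_level m"
proof (induction m)
  case (Suc m)
  then show ?case using tooth_level_less[of m] by (cases "n = m") auto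
qed simp

lemma tooth_path_facts:
  assumes "u \<in> below (spine k)"
  shows "is_path V E (tooth_path k u)" and "last (tooth_path k u) \<in> U"
proof -
  have "u \<in> U" and "u \<in> V" using assms UV unfolding below_def by auto
  then show "is_path V E (tooth_path k u)" and "last (tooth_path k u) \<in> U"
    using branch_depth(2)[OF assms] is_path_ancestor_path last_ancestor_path
    unfolding tooth_path_def by auto
qed

lemma spine_comb: "\<exists>P. is_comb V E spine P \<and> (\<forall>i. last (P i) \<in> U)"
proof (intro exI conjI)
  let ?P = "\<lambda>n. tooth_path (tooth_level n) (tooth_target (tooth_level n))"
  have level: "tooth_level n \<le> depth x \<and> depth x < tooth_level (Suc n)"
    if "x \<in> set (?P n)" for x n
    using tooth_path_depths[OF tooth_target_below that] by (simp add: less_Suc_eq_le)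
  have disjoint: "set (?P i) \<inter> set (?P j) = {}" if "i < j" for i j
  proof -
    have "depth x < depth x" if "x \<in> set (?P i)" "x \<in> set (?P j)" for x
      using level[OF that(1)] level[OF that(2)] tooth_level_mono[OF \<open>i < j\<close>] by linarith
    then show ?thesis by blast
  qed
  show "is_comb V E spine ?P"
    unfolding is_comb_def
  proof (intro conjI allI impI)
    fix i j :: nat assume "i \<noteq> j"
    then show "set (?P i) \<inter> set (?P j) = {}"
      using disjoint[of i j] disjoint[of j i] by (auto simp: neq_iff)
  qed (use spine_is_ray tooth_path_facts(1) tooth_path_meets_spine tooth_target_below in auto)
  show "\<forall>i. last (?P i) \<in> U"
    using tooth_path_facts(2)[OF tooth_target_below] by simp
qed

end
end

lemma exists_end_in_closure:
  assumes "graph V E" and "locally_finite V E" and "connected_graph V E"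
    and "U \<subseteq> V" and "infinite U"
  shows "\<exists>\<omega>. is_end V E \<omega> \<and> end_in_closure V E \<omega> U"
proof -
  obtain root where "root \<in> V" using assms(3) unfolding connected_graph_def by blast
  then interpret bfs_tree V E root using assms(1-3) by unfold_locales
  obtain P where P: "is_comb V E (spine U) P" "\<forall>i. last (P i) \<in> U"
    using spine_comb[OF assms(4,5)] by blast
  have ray: "is_ray V E (spine U)" using spine_is_ray[OF assms(4,5)] .
  let ?\<omega> = "{r'. is_ray V E r' \<and> ray_equiv V E (spine U) r'}"
  have "is_end V E ?\<omega>" unfolding is_end_def using ray by blast
  moreover have "end_in_closure V E ?\<omega> U"
    unfolding end_in_closure_def using P ray ray_equiv_refl by blast
  ultimately show ?thesis by blast
qed

section \<open>Ends and separations\<close>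

lemma comb_teeth_disjoint:
  assumes "is_comb V E r P" and "x \<in> set (P i)" and "x \<in> set (P j)"
  shows "i = j"
  using assms unfolding is_comb_def by blast

lemma comb_finitely_many_teeth_meet:
  assumes "is_comb V E r P" and "finite X"
  shows "finite {i. set (P i) \<inter> X \<noteq> {}}"
proof -
  have "finite {i. x \<in> set (P i)}" for x
  proof (cases "\<exists>i. x \<in> set (P i)")
    case True
    then obtain i where "x \<in> set (P i)" by blast
    then have "{i. x \<in> set (P i)} \<subseteq> {i}" using comb_teeth_disjoint[OF assms(1)] by blast
    then show ?thesis using finite_subset by blast
  qed simp
  then have "finite (\<Union>x\<in>X. {i. x \<in> set (P i)})" using assms(2) by (intro finite_UN_I)
  moreover have "{i. set (P i) \<inter> X \<noteq> {}} = (\<Union>x\<in>X. {i. x \<in> set (P i)})" by blast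
  ultimately show ?thesis by simp
qed

lemma comb_finitely_many_teeth_start_on:
  assumes "is_comb V E r P" and "finite S"
  shows "finite {i. hd (P i) \<in> S}"
proof -
  have "hd (P i) \<in> set (P i)" for i
    using assms(1) unfolding is_comb_def is_path_def by simp
  then have "inj (\<lambda>i. hd (P i))"
    using comb_teeth_disjoint[OF assms(1)] by (metis injI)
  then show ?thesis using finite_vimageI[OF assms(2)] by (simp add: vimage_def)
qed

text \<open>All but finitely many teeth start on the tail of the spine in \<open>D - C\<close> and avoid the finite
  separator; such a tooth is a path in \<open>G - (C \<inter> D)\<close>, so it ends in \<open>D - C\<close> as well.\<close>

lemma comb_tooth_in_side:
  assumes "graph V E" and "is_comb V E r P" and "is_sep V E C D" and "finite (C \<inter> D)"
    and "finite {n. r n \<notin> D - C}"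
  shows "\<exists>i. last (P i) \<in> D - C"
proof -
  obtain J where J: "\<And>n. r n \<notin> D - C \<Longrightarrow> n < J"
    using assms(5) unfolding finite_nat_set_iff_bounded by blast
  have "finite ({i. hd (P i) \<in> r ` {..<J}} \<union> {i. set (P i) \<inter> (C \<inter> D) \<noteq> {}})"
    using comb_finitely_many_teeth_start_on[OF assms(2)] comb_finitely_many_teeth_meet[OF assms(2,4)]
    by simp
  then obtain i where early: "hd (P i) \<notin> r ` {..<J}" and avoid: "set (P i) \<inter> (C \<inter> D) = {}"
    using ex_new_if_finite[OF infinite_UNIV_nat] by blast
  have path: "is_path V E (P i)" and "hd (P i) \<in> range r"
    using assms(2) unfolding is_comb_def by auto
  then obtain n where n: "hd (P i) = r n" by blast
  then have "r n \<in> D - C" using early J[of n] by auto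
  then have "hd (P i) \<in> D - C" using n by simp
  moreover have "set (P i) \<subseteq> V - (D \<inter> C)" using avoid path unfolding is_path_def by blast
  then have "conn_in E (V - (D \<inter> C)) (hd (P i)) (last (P i))"
    using path unfolding is_path_def by (intro conn_in_path) auto
  ultimately have "last (P i) \<in> D - C"
    using conn_in_stays_on_side[OF is_sep_swap[OF assms(1,3)]] by blast
  then show ?thesis by blast
qed

lemma end_in_closure_has_point_in_side:
  assumes "graph V E" and "end_in_closure V E \<omega> U" and "(C, D) \<in> end_pre_tangle V E \<omega>"
  shows "\<exists>u\<in>U. u \<in> D - C"
proof -
  obtain r P where "is_comb V E r P" "r \<in> \<omega>" "\<forall>i. last (P i) \<in> U"
    using assms(2) unfolding end_in_closure_def by blast
  moreover have "is_sep V E C D" "finite (C \<inter> D)" "finite {n. r n \<notin> D - C}"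
    using assms(3) \<open>r \<in> \<omega>\<close> unfolding end_pre_tangle_def by auto
  ultimately show ?thesis using comb_tooth_in_side[OF assms(1)] by blast
qed

lemma end_pre_tangle_asym:
  assumes "is_end V E \<omega>" and "(C, D) \<in> end_pre_tangle V E \<omega>"
  shows "(D, C) \<notin> end_pre_tangle V E \<omega>"
proof
  assume "(D, C) \<in> end_pre_tangle V E \<omega>"
  moreover obtain r where "r \<in> \<omega>" using end_has_ray[OF assms(1)] by blast
  ultimately have "finite ({n. r n \<notin> D - C} \<union> {n. r n \<notin> C - D})"
    using assms(2) unfolding end_pre_tangle_def by auto
  moreover have "{n. r n \<notin> D - C} \<union> {n. r n \<notin> C - D} = UNIV" by blast
  ultimately show False by (metis infinite_UNIV_nat)
qed

lemma end_pre_tangle_memI: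
  assumes "is_sep V E C D" and "finite (C \<inter> D)" and "\<And>r. r \<in> \<omega> \<Longrightarrow> \<exists>p. \<forall>q\<ge>p. r q \<in> D - C"
  shows "(C, D) \<in> end_pre_tangle V E \<omega>"
proof -
  have "finite {n. r n \<notin> D - C}" if r: "r \<in> \<omega>" for r
  proof -
    obtain p where "\<forall>q\<ge>p. r q \<in> D - C" using assms(3)[OF r] by blast
    then have "{n. r n \<notin> D - C} \<subseteq> {..<p}" by (auto simp: not_less[symmetric])
    then show ?thesis using finite_subset by blast
  qed
  then show ?thesis using assms(1,2) unfolding end_pre_tangle_def by blast
qed

lemma equiv_ray_tail_conn_in:
  assumes "graph V E" and "is_ray V E r1" and "is_ray V E r" and "ray_equiv V E r1 r"
    and "finite S" and "\<forall>i\<ge>m. r1 i \<notin> S"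
  shows "\<exists>p. \<forall>q\<ge>p. conn_in E (V - S) (r1 m) (r q)"
proof -
  obtain m' p where m': "\<forall>i\<ge>m'. r1 i \<notin> S" and p: "\<forall>j\<ge>p. r j \<notin> S"
      and "conn_in E (V - S) (r1 m') (r p)"
    using assms(4,5) unfolding ray_equiv_def by blast
  moreover have "conn_in E (V - S) (r1 m) (r1 m')"
    using ray_tails_conn_in[OF assms(1,2,6) m'] .
  ultimately have "conn_in E (V - S) (r1 m) (r p)" by (blast intro: conn_in_trans)
  then show ?thesis
    using ray_tail_conn_in[OF assms(3) p] by (blast intro: conn_in_trans)
qed

lemma component_side_is_sep:
  fixes S :: "'a set" and x :: 'a
  assumes "graph V E"
  defines "K \<equiv> {y. conn_in E (V - S) x y}"
  shows "is_sep V E (V - K) (K \<union> (S \<inter> V))"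
  unfolding is_sep_def
proof (intro conjI ballI notI)
  have "K \<subseteq> V - S" unfolding K_def using conn_in_mem by fastforce
  then show "(V - K) \<union> (K \<union> (S \<inter> V)) = V" by blast
  fix u v assume u: "u \<in> (V - K) - (K \<union> (S \<inter> V))" and v: "v \<in> (K \<union> (S \<inter> V)) - (V - K)"
    and "E u v"
  then have "conn_in E (V - S) v u"
    using \<open>K \<subseteq> V - S\<close> graph_edge_sym[OF assms(1)] by (intro conn_in_edge) auto
  then have "u \<in> K" using v unfolding K_def by (blast intro: conn_in_trans)
  then show False using u by blast
qed

lemma ends_eq_if_ray_equiv:
  assumes "graph V E" and "is_ray V E r1" and "is_ray V E r2" and "ray_equiv V E r1 r2"
  shows "{r. is_ray V E r \<and> ray_equiv V E r1 r} = {r. is_ray V E r \<and> ray_equiv V E r2 r}"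
  using ray_equiv_trans[OF assms(1,2) ray_equiv_sym[OF assms(1,4)]]
    ray_equiv_trans[OF assms(1,3) assms(4)] by blast

lemma component_separation_in_end_pre_tangle:
  fixes S :: "'a set" and x :: 'a
  assumes "graph V E" and "is_ray V E r0" and "finite S" and "\<forall>i\<ge>n. r0 i \<notin> S"
  defines "K \<equiv> {y. conn_in E (V - S) x y}"
  shows "r0 n \<in> K \<Longrightarrow>
      (V - K, K \<union> (S \<inter> V)) \<in> end_pre_tangle V E {r. is_ray V E r \<and> ray_equiv V E r0 r}"
    and "r0 n \<notin> K \<Longrightarrow>
      (K \<union> (S \<inter> V), V - K) \<in> end_pre_tangle V E {r. is_ray V E r \<and> ray_equiv V E r0 r}"
proof -
  have sep: "is_sep V E (V - K) (K \<union> (S \<inter> V))"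
    unfolding K_def by (rule component_side_is_sep[OF assms(1)])
  have fin: "finite ((V - K) \<inter> (K \<union> (S \<inter> V)))" using assms(3) by (auto intro: finite_subset)
  have K: "K \<subseteq> V - S" unfolding K_def using conn_in_mem by fastforce
  have tail: "\<exists>p. \<forall>q\<ge>p. conn_in E (V - S) (r0 n) (r q)"
    if "r \<in> {r. is_ray V E r \<and> ray_equiv V E r0 r}" for r
    using that equiv_ray_tail_conn_in[OF assms(1,2) _ _ assms(3,4)] by blast
  show "(V - K, K \<union> (S \<inter> V)) \<in> end_pre_tangle V E {r. is_ray V E r \<and> ray_equiv V E r0 r}"
    if "r0 n \<in> K"
  proof (rule end_pre_tangle_memI[OF sep fin])
    fix r assume "r \<in> {r. is_ray V E r \<and> ray_equiv V E r0 r}"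
    then obtain p where "\<forall>q\<ge>p. conn_in E (V - S) (r0 n) (r q)" using tail by blast
    then have "\<forall>q\<ge>p. r q \<in> K" using \<open>r0 n \<in> K\<close> unfolding K_def by (blast intro: conn_in_trans)
    then show "\<exists>p. \<forall>q\<ge>p. r q \<in> (K \<union> (S \<inter> V)) - (V - K)" by blast
  qed
  show "(K \<union> (S \<inter> V), V - K) \<in> end_pre_tangle V E {r. is_ray V E r \<and> ray_equiv V E r0 r}"
    if "r0 n \<notin> K"
  proof (rule end_pre_tangle_memI[OF is_sep_swap[OF assms(1) sep]])
    show "finite ((K \<union> (S \<inter> V)) \<inter> (V - K))" using fin by (simp add: Int_commute)
    fix r assume "r \<in> {r. is_ray V E r \<and> ray_equiv V E r0 r}"
    then obtain p where p: "\<forall>q\<ge>p. conn_in E (V - S) (r0 n) (r q)" using tail by blast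
    have "r q \<in> (V - K) - (K \<union> (S \<inter> V))" if "q \<ge> p" for q
    proof -
      have conn: "conn_in E (V - S) (r0 n) (r q)" using p that by blast
      then have "r q \<notin> K"
        using \<open>r0 n \<notin> K\<close> conn_in_sym[OF assms(1) conn] unfolding K_def by (blast intro: conn_in_trans)
      moreover have "r q \<in> V - S" using conn_in_mem[OF conn] by blast
      ultimately show ?thesis by blast
    qed
    then show "\<exists>p. \<forall>q\<ge>p. r q \<in> (V - K) - (K \<union> (S \<inter> V))" by blast
  qed
qed

text \<open>Two inequivalent rays are separated by a finite \<open>S\<close>; the separation cutting off the component
  of \<open>G - S\<close> containing a tail of the first ray is oriented differently by the two ends.\<close>

lemma distinct_ends_separated:
  assumes "graph V E" and "is_end V E \<omega>1" and "is_end V E \<omega>2" and "\<omega>1 \<noteq> \<omega>2"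
  shows "\<exists>C D. is_sep V E C D \<and> (C, D) \<in> end_pre_tangle V E \<omega>1 \<and> (D, C) \<in> end_pre_tangle V E \<omega>2"
proof -
  obtain r1 where r1: "is_ray V E r1" "\<omega>1 = {r. is_ray V E r \<and> ray_equiv V E r1 r}"
    using assms(2) unfolding is_end_def by blast
  obtain r2 where r2: "is_ray V E r2" "\<omega>2 = {r. is_ray V E r \<and> ray_equiv V E r2 r}"
    using assms(3) unfolding is_end_def by blast
  have "\<not> ray_equiv V E r1 r2"
    using ends_eq_if_ray_equiv[OF assms(1) r1(1) r2(1)] r1(2) r2(2) assms(4) by blast
  then obtain S where S: "finite S" and apart: "\<not> (\<exists>m n. (\<forall>i\<ge>m. r1 i \<notin> S) \<and> (\<forall>j\<ge>n. r2 j \<notin> S)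
       \<and> conn_in E (V - S) (r1 m) (r2 n))"
    unfolding ray_equiv_def by blast
  obtain m where m: "\<forall>i\<ge>m. r1 i \<notin> S" using ray_eventually_avoids[OF r1(1) S] by blast
  obtain n where n: "\<forall>i\<ge>n. r2 i \<notin> S" using ray_eventually_avoids[OF r2(1) S] by blast
  define K where "K = {y. conn_in E (V - S) (r1 m) y}"
  have "r1 m \<in> K" unfolding K_def using r1(1) m by (auto intro: conn_in_refl simp: is_ray_def)
  moreover have "r2 n \<notin> K" unfolding K_def using apart m n by blast
  ultimately have "(V - K, K \<union> (S \<inter> V)) \<in> end_pre_tangle V E \<omega>1"
    and "(K \<union> (S \<inter> V), V - K) \<in> end_pre_tangle V E \<omega>2"
    unfolding r1(2) r2(2) K_def
    using component_separation_in_end_pre_tangle[OF assms(1) r1(1) S m]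
      component_separation_in_end_pre_tangle[OF assms(1) r2(1) S n] by blast+
  moreover have "is_sep V E (V - K) (K \<union> (S \<inter> V))"
    unfolding K_def by (rule component_side_is_sep[OF assms(1)])
  ultimately show ?thesis by blast
qed

lemma orientations_Upair: "orientations (Upair X Y) = {(X, Y), (Y, X)}"
  unfolding orientations_def by auto

lemma end_pre_tangles_distinguished_iff:
  assumes "is_end V E \<omega>1" and "is_end V E \<omega>2"
  shows "distinguishes (Upair X Y) (end_pre_tangle V E \<omega>1) (end_pre_tangle V E \<omega>2) \<longleftrightarrow>
    (X, Y) \<in> end_pre_tangle V E \<omega>1 \<and> (Y, X) \<in> end_pre_tangle V E \<omega>2 \<or>
    (Y, X) \<in> end_pre_tangle V E \<omega>1 \<and> (X, Y) \<in> end_pre_tangle V E \<omega>2"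
  using end_pre_tangle_asym[OF assms(1), of X Y] end_pre_tangle_asym[OF assms(1), of Y X]
    end_pre_tangle_asym[OF assms(2), of X Y] end_pre_tangle_asym[OF assms(2), of Y X]
  unfolding distinguishes_def orientations_Upair
  by (cases "(X, Y) \<in> end_pre_tangle V E \<omega>1"; cases "(Y, X) \<in> end_pre_tangle V E \<omega>1";
      cases "(X, Y) \<in> end_pre_tangle V E \<omega>2"; cases "(Y, X) \<in> end_pre_tangle V E \<omega>2") auto

lemma nested_not_splitting_separator:
  assumes "nested (Upair X Y) (Upair C D)" and "x \<in> C \<inter> D" and "y \<in> C \<inter> D"
  shows "\<not> (x \<in> X - Y \<and> y \<in> Y - X)"
  using assms unfolding nested_def orientations_Upair sep_le_def by auto

lemma end_in_closure_unique:
  assumes "graph V E" and "nested_set N"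
    and "\<And>x y. x \<in> U \<Longrightarrow> y \<in> U \<Longrightarrow> \<exists>C D. Upair C D \<in> N \<and> x \<in> C \<inter> D \<and> y \<in> C \<inter> D"
    and "distinguishes_set V E N
           {end_pre_tangle V E \<omega> | \<omega>. is_end V E \<omega> \<and> end_in_closure V E \<omega> U}"
    and end1: "is_end V E \<omega>1" "end_in_closure V E \<omega>1 U"
    and end2: "is_end V E \<omega>2" "end_in_closure V E \<omega>2 U"
  shows "\<omega>1 = \<omega>2"
proof (rule ccontr)
  let ?P1 = "end_pre_tangle V E \<omega>1" and ?P2 = "end_pre_tangle V E \<omega>2"
  assume "\<omega>1 \<noteq> \<omega>2"
  then obtain C D where "is_sep V E C D" "(C, D) \<in> ?P1" "(D, C) \<in> ?P2"
    using distinct_ends_separated[OF assms(1) end1(1) end2(1)] by blast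
  then have "separation V E (Upair C D) \<and> distinguishes (Upair C D) ?P1 ?P2"
    unfolding separation_def end_pre_tangles_distinguished_iff[OF end1(1) end2(1)] by blast
  moreover have "?P1 \<in> {end_pre_tangle V E \<omega> | \<omega>. is_end V E \<omega> \<and> end_in_closure V E \<omega> U}"
    and "?P2 \<in> {end_pre_tangle V E \<omega> | \<omega>. is_end V E \<omega> \<and> end_in_closure V E \<omega> U}"
    using end1 end2 by blast+
  ultimately have "\<exists>t\<in>N. distinguishes t ?P1 ?P2"
    using assms(4)[unfolded distinguishes_set_def, rule_format] by blast
  then obtain t where "t \<in> N" and t: "distinguishes t ?P1 ?P2" by blast
  obtain X Y where XY: "t = Upair X Y" "(X, Y) \<in> ?P1" "(Y, X) \<in> ?P2"
  proof (cases t)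
    case (Upair X Y)
    then have "(X, Y) \<in> ?P1 \<and> (Y, X) \<in> ?P2 \<or> (Y, X) \<in> ?P1 \<and> (X, Y) \<in> ?P2"
      using t end_pre_tangles_distinguished_iff[OF end1(1) end2(1)] by simp
    moreover have "t = Upair Y X" using Upair by simp
    ultimately show thesis using that Upair by blast
  qed
  obtain x where x: "x \<in> U" "x \<in> Y - X"
    using end_in_closure_has_point_in_side[OF assms(1) end1(2) XY(2)] by blast
  obtain y where y: "y \<in> U" "y \<in> X - Y"
    using end_in_closure_has_point_in_side[OF assms(1) end2(2) XY(3)] by blast
  obtain C' D' where "Upair C' D' \<in> N" "x \<in> C' \<inter> D'" "y \<in> C' \<inter> D'"
    using assms(3)[OF x(1) y(1)] by blast
  moreover have "nested (Upair X Y) (Upair C' D')"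
    using assms(2) \<open>t \<in> N\<close> calculation(1) XY(1) unfolding nested_set_def by blast
  ultimately show False using nested_not_splitting_separator[of X Y C' D' y x] x y by blast
qed

section \<open>Chains of tight separations\<close>

lemma chain_limit_is_sep:
  fixes a b :: "nat \<Rightarrow> 'a set"
  assumes "\<And>i. is_sep V E (a i) (b i)" and "\<And>i j. i \<le> j \<Longrightarrow> a i \<subseteq> a j \<and> b j \<subseteq> b i"
  shows "is_sep V E (\<Union>i. a i) (\<Inter>i. b i)"
  unfolding is_sep_def
proof (intro conjI ballI)
  have "v \<in> V \<longleftrightarrow> v \<in> a i \<or> v \<in> b i" for v i
    using assms(1)[of i] unfolding is_sep_def by blast
  then show "(\<Union>i. a i) \<union> (\<Inter>i. b i) = V" by blast
  fix x y assume x: "x \<in> (\<Union>i. a i) - (\<Inter>i. b i)" and y: "y \<in> (\<Inter>i. b i) - (\<Union>i. a i)"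
  then obtain i k where "x \<in> a i" "x \<notin> b k" by blast
  moreover have "i \<le> max i k" and "k \<le> max i k" by simp_all
  ultimately have "x \<in> a (max i k) - b (max i k)"
    using assms(2) by blast
  moreover have "y \<in> b (max i k) - a (max i k)" using y by blast
  ultimately show "\<not> E x y" using assms(1)[of "max i k"] unfolding is_sep_def by blast
qed

lemma connected_separator_nonempty:
  assumes "connected_graph V E" and "is_sep V E A B" and "A - B \<noteq> {}" and "B \<noteq> {}"
  shows "A \<inter> B \<noteq> {}"
proof
  assume empty: "A \<inter> B = {}"
  obtain x y where "x \<in> A - B" "y \<in> B" using assms(3,4) by blast
  moreover from this have "conn_in E (V - (A \<inter> B)) x y"
    using assms(1,2) empty unfolding connected_graph_def is_sep_def by auto
  ultimately show False using conn_in_stays_on_side[OF assms(2)] by blast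
qed

lemma finite_subset_eventually_in_chain:
  fixes a :: "nat \<Rightarrow> 'a set"
  assumes "finite F" and "F \<subseteq> (\<Union>i. a i)" and "\<And>i j. i \<le> j \<Longrightarrow> a i \<subseteq> a j"
  shows "\<exists>j. \<forall>i\<ge>j. F \<subseteq> a i"
proof -
  have "subset.chain UNIV (range a)"
    unfolding subset.chain_def using assms(3) nat_le_linear by blast
  moreover have "F \<subseteq> \<Union>(range a)" using assms(2) by simp
  ultimately obtain A where "A \<in> range a" "F \<subseteq> A"
    using finite_subset_Union_chain[OF assms(1)] by blast
  then obtain j where "F \<subseteq> a j" by blast
  then show ?thesis using assms(3) by blast
qed

lemma strict_sep_le_chain:
  fixes s :: "nat \<Rightarrow> 'a set \<times> 'a set"
  assumes "\<forall>i j. i < j \<longrightarrow> sep_le (s i) (s j) \<and> s i \<noteq> s j"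
  shows "\<And>i j. i \<le> j \<Longrightarrow> fst (s i) \<subseteq> fst (s j) \<and> snd (s j) \<subseteq> snd (s i)"
    and "inj s"
proof -
  show "fst (s i) \<subseteq> fst (s j) \<and> snd (s j) \<subseteq> snd (s i)" if "i \<le> j" for i j
  proof (cases "i = j")
    case False
    then have "sep_le (s i) (s j)" using assms that by simp
    then show ?thesis unfolding sep_le_def by blast
  qed simp
  show "inj s"
  proof (rule injI)
    fix i j assume "s i = s j"
    then show "i = j" using assms[rule_format, of i j] assms[rule_format, of j i]
      by (cases i j rule: linorder_cases) auto
  qed
qed

lemma chain_separator_contains_pair:
  fixes a b :: "nat \<Rightarrow> 'a set"
  assumes "\<And>i j. i \<le> j \<Longrightarrow> a i \<subseteq> a j \<and> b j \<subseteq> b i"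
    and "x \<in> (\<Union>i. a i) \<inter> (\<Inter>i. b i)" and "y \<in> (\<Union>i. a i) \<inter> (\<Inter>i. b i)"
  shows "\<exists>i. x \<in> a i \<inter> b i \<and> y \<in> a i \<inter> b i"
proof -
  have "finite {x, y}" and "{x, y} \<subseteq> (\<Union>i. a i)" using assms(2,3) by auto
  moreover have "a i \<subseteq> a j" if "i \<le> j" for i j using assms(1)[OF that] by blast
  ultimately have "\<exists>j. \<forall>i\<ge>j. {x, y} \<subseteq> a i" by (rule finite_subset_eventually_in_chain)
  then obtain j where "{x, y} \<subseteq> a j" by blast
  then show ?thesis using assms(2,3) by blast
qed

lemma tight_sep_Upair:
  assumes "graph V E" and "tight_sep V E (Upair X Y)"
  shows "is_sep V E X Y" and "\<exists>K. tight_component V E (X \<inter> Y) K \<and> K \<subseteq> X - Y"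
    and "\<exists>K. tight_component V E (X \<inter> Y) K \<and> K \<subseteq> Y - X"
proof -
  obtain X' Y' where "Upair X Y = Upair X' Y'" "is_sep V E X' Y'"
      "\<exists>K. tight_component V E (X' \<inter> Y') K \<and> K \<subseteq> X' - Y'"
      "\<exists>K. tight_component V E (X' \<inter> Y') K \<and> K \<subseteq> Y' - X'"
    using assms(2) unfolding tight_sep_def by blast
  then show "is_sep V E X Y" "\<exists>K. tight_component V E (X \<inter> Y) K \<and> K \<subseteq> X - Y"
      "\<exists>K. tight_component V E (X \<inter> Y) K \<and> K \<subseteq> Y - X"
    using is_sep_swap[OF assms(1)] by (auto simp: Int_commute)
qed

text \<open>If a tight component of \<open>G - (C \<inter> D)\<close> contains a vertex of \<open>B - A\<close>, it lies in \<open>B - A\<close>,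
  so every vertex of \<open>C \<inter> D\<close>, being a neighbour of it, lies in \<open>B\<close>.\<close>

lemma tight_separator_eq_limit:
  assumes "graph V E" and "is_sep V E A B" and "C \<subseteq> A" and "B \<subseteq> D" and "A \<inter> B \<subseteq> C \<inter> D"
    and "tight_component V E (C \<inter> D) K" and "w \<in> K" and "w \<in> B - A"
  shows "C \<inter> D = A \<inter> B"
proof (rule ccontr)
  assume "C \<inter> D \<noteq> A \<inter> B"
  then obtain y where y: "y \<in> C \<inter> D" "y \<notin> A \<inter> B" using assms(5) by blast
  then have "y \<in> nbhd V E K" using assms(6) unfolding tight_component_def by blast
  then obtain u where u: "u \<in> K" "E u y" unfolding nbhd_def by blast
  obtain x0 where K: "K = {v. conn_in E (V - (C \<inter> D)) x0 v}"
    using assms(6) unfolding tight_component_def component_def by blast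
  have "conn_in E (V - (C \<inter> D)) x0 w" "conn_in E (V - (C \<inter> D)) x0 u"
    using K assms(7) u(1) by blast+
  then have "conn_in E (V - (C \<inter> D)) w u"
    by (rule conn_in_trans[OF conn_in_sym[OF assms(1)]])
  then have "conn_in E (V - (B \<inter> A)) w u"
    by (rule conn_in_mono) (use assms(5) in blast)
  then have "u \<in> B - A"
    using conn_in_stays_on_side[OF is_sep_swap[OF assms(1,2)]] assms(8) by blast
  moreover have "y \<in> A - B" using y assms(3) by blast
  ultimately show False
    using u(2) graph_edge_sym[OF assms(1)] assms(2) unfolding is_sep_def by blast
qed

lemma finite_nbhd:
  assumes "graph V E" and "locally_finite V E" and "finite F"
  shows "finite (nbhd V E F)"
proof -
  have "nbhd V E F \<subseteq> (\<Union>f\<in>F \<inter> V. {t. E f t})"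
    unfolding nbhd_def using graph_edge_in_V[OF assms(1)] by blast
  moreover have "finite (\<Union>f\<in>F \<inter> V. {t. E f t})"
    using assms(2,3) unfolding locally_finite_def by (intro finite_UN_I) auto
  ultimately show ?thesis by (rule finite_subset)
qed

lemma connected_reaches_nbhd:
  assumes "graph V E" and "connected_graph V E" and "x \<in> F" and "F \<subseteq> V" and "v \<in> V - F"
  shows "\<exists>t\<in>nbhd V E F. conn_in E (V - F) t v"
proof -
  have "conn_in E V v x" using assms(2-5) unfolding connected_graph_def by blast
  then obtain t f where vt: "conn_in E (V - F) v t" and "E t f" "f \<in> F"
    using conn_in_exit[OF _ _ assms(3)] assms(5) by blast
  then have "t \<in> nbhd V E F"
    unfolding nbhd_def using conn_in_mem[OF vt] graph_edge_sym[OF assms(1)] by blast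
  then show ?thesis using conn_in_sym[OF assms(1) vt] by blast
qed

text \<open>Each component of \<open>G - (C \<inter> D)\<close> lies on one side and contains a neighbour of \<open>C \<inter> D\<close>,
  so a side is determined by the neighbours of the separator it contains.\<close>

lemma sep_side_eq_reach_from_nbhd:
  assumes "graph V E" and "connected_graph V E" and "is_sep V E C D" and "C \<inter> D = F"
    and "F \<noteq> {}"
  shows "C = F \<union> {v \<in> V - F. \<exists>t\<in>nbhd V E F \<inter> C. conn_in E (V - F) t v}"
proof
  have "F \<subseteq> V" using assms(3,4) unfolding is_sep_def by blast
  obtain x where "x \<in> F" using assms(5) by blast
  show "C \<subseteq> F \<union> {v \<in> V - F. \<exists>t\<in>nbhd V E F \<inter> C. conn_in E (V - F) t v}"
  proof
    fix v assume "v \<in> C"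
    show "v \<in> F \<union> {v \<in> V - F. \<exists>t\<in>nbhd V E F \<inter> C. conn_in E (V - F) t v}"
    proof (cases "v \<in> F")
      case False
      then have v: "v \<in> V - F" "v \<in> C - D" using \<open>v \<in> C\<close> assms(3,4) unfolding is_sep_def by blast+
      then obtain t where "t \<in> nbhd V E F" and t: "conn_in E (V - F) t v"
        using connected_reaches_nbhd[OF assms(1,2) \<open>x \<in> F\<close> \<open>F \<subseteq> V\<close>] by blast
      moreover have "conn_in E (V - (C \<inter> D)) v t" using conn_in_sym[OF assms(1) t] assms(4) by simp
      ultimately have "t \<in> C" using conn_in_stays_on_side[OF assms(3)] v(2) by blast
      then show ?thesis using \<open>t \<in> nbhd V E F\<close> t v by blast
    qed simp
  qed
  show "F \<union> {v \<in> V - F. \<exists>t\<in>nbhd V E F \<inter> C. conn_in E (V - F) t v} \<subseteq> C"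
  proof
    fix v assume "v \<in> F \<union> {v \<in> V - F. \<exists>t\<in>nbhd V E F \<inter> C. conn_in E (V - F) t v}"
    then consider "v \<in> F" | t where "t \<in> nbhd V E F" "t \<in> C" "conn_in E (V - F) t v"
      by blast
    then show "v \<in> C"
    proof cases
      case 2
      then have "t \<in> C - D" using assms(4) unfolding nbhd_def by blast
      moreover have "conn_in E (V - (C \<inter> D)) t v" using 2(3) assms(4) by simp
      ultimately show ?thesis using conn_in_stays_on_side[OF assms(3)] by blast
    qed (use assms(4) in blast)
  qed
qed

lemma finite_separations_with_separator:
  assumes "graph V E" and "connected_graph V E" and "locally_finite V E"
    and "finite F" and "F \<noteq> {}"
  shows "finite {(C, D). is_sep V E C D \<and> C \<inter> D = F}"
proof -
  define side where "side Y = F \<union> {v \<in> V - F. \<exists>t\<in>Y. conn_in E (V - F) t v}" for Y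
  have "{(C, D). is_sep V E C D \<and> C \<inter> D = F}
      \<subseteq> (\<lambda>Y. (side Y, (V - side Y) \<union> F)) ` Pow (nbhd V E F)"
  proof
    fix p assume "p \<in> {(C, D). is_sep V E C D \<and> C \<inter> D = F}"
    then obtain C D where CD: "p = (C, D)" "is_sep V E C D" "C \<inter> D = F" by blast
    then have "C = side (nbhd V E F \<inter> C)"
      unfolding side_def using sep_side_eq_reach_from_nbhd[OF assms(1,2) _ _ assms(5)] by blast
    moreover have "D = (V - C) \<union> F" using CD unfolding is_sep_def by blast
    ultimately show "p \<in> (\<lambda>Y. (side Y, (V - side Y) \<union> F)) ` Pow (nbhd V E F)"
      using CD(1) by (intro image_eqI[where x = "nbhd V E F \<inter> C"]) auto
  qed
  then show ?thesis by (rule finite_subset) (use finite_nbhd[OF assms(1,3,4)] in simp)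
qed

lemma frequently_in_difference_in_limit:
  fixes a b :: "nat \<Rightarrow> 'a set"
  assumes "\<And>i j. i \<le> j \<Longrightarrow> a i \<subseteq> a j \<and> b j \<subseteq> b i" and "infinite {i. w \<in> b i - a i}"
  shows "w \<in> (\<Inter>i. b i) - (\<Union>i. a i)"
proof -
  have "\<exists>i\<ge>k. w \<in> b i - a i" for k
    using assms(2) unfolding infinite_nat_iff_unbounded_le by blast
  then have "w \<in> b k - a k" for k using assms(1) by blast
  then show ?thesis by blast
qed

lemma infinitely_often_same_neighbour:
  fixes j :: nat
  assumes "graph V E" and "locally_finite V E" and "x \<in> V"
    and "\<And>i. j \<le> i \<Longrightarrow> \<exists>w. E w x \<and> P i w"
  shows "\<exists>w. infinite {i. j \<le> i \<and> P i w}"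
proof -
  have "\<exists>w. j \<le> i \<longrightarrow> E w x \<and> P i w" for i using assms(4) by blast
  then obtain nb where "\<forall>i. j \<le> i \<longrightarrow> E (nb i) x \<and> P i (nb i)"
    using choice[of "\<lambda>i w. j \<le> i \<longrightarrow> E w x \<and> P i w"] by blast
  then have nb: "\<And>i. j \<le> i \<Longrightarrow> E (nb i) x \<and> P i (nb i)" by blast
  have "nb ` {j..} \<subseteq> {w. E x w}"
  proof
    fix w assume "w \<in> nb ` {j..}"
    then have "E w x" using nb by auto
    then show "w \<in> {w. E x w}" using graph_edge_sym[OF assms(1)] by blast
  qed
  moreover have "finite {w. E x w}" using assms(2,3) unfolding locally_finite_def by blast
  ultimately have "finite (nb ` {j..})" by (rule finite_subset)
  then have "\<exists>w\<in>nb ` {j..}. infinite (nb -` {w} \<inter> {j..})"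
    by (rule inf_img_fin_dom') (simp add: infinite_Ici)
  then obtain w where "infinite (nb -` {w} \<inter> {j..})" by blast
  moreover have "nb -` {w} \<inter> {j..} \<subseteq> {i. j \<le> i \<and> P i w}" using nb by auto
  ultimately have "infinite {i. j \<le> i \<and> P i w}" using infinite_super by blast
  then show ?thesis by blast
qed

lemma infinitely_many_chain_separators_eq_limit:
  fixes a b :: "nat \<Rightarrow> 'a set"
  assumes "graph V E" and "locally_finite V E"
    and sep: "\<And>i. is_sep V E (a i) (b i)"
    and chain: "\<And>i j. i \<le> j \<Longrightarrow> a i \<subseteq> a j \<and> b j \<subseteq> b i"
    and tight: "\<And>i. \<exists>K. tight_component V E (a i \<inter> b i) K \<and> K \<subseteq> b i - a i"
    and fin: "finite ((\<Union>i. a i) \<inter> (\<Inter>i. b i))" and x: "x \<in> (\<Union>i. a i) \<inter> (\<Inter>i. b i)"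
  shows "infinite {i. a i \<inter> b i = (\<Union>i. a i) \<inter> (\<Inter>i. b i)}"
proof -
  define A where "A = (\<Union>i. a i)"
  define B where "B = (\<Inter>i. b i)"
  define P where "P i w \<longleftrightarrow> (\<exists>K. tight_component V E (a i \<inter> b i) K \<and> K \<subseteq> b i - a i \<and> w \<in> K)"
    for i w
  have sepAB: "is_sep V E A B" unfolding A_def B_def by (rule chain_limit_is_sep[OF sep chain])
  obtain j where "\<forall>i\<ge>j. A \<inter> B \<subseteq> a i"
    using finite_subset_eventually_in_chain[OF fin[folded A_def B_def], of a] chain
    unfolding A_def by blast
  then have in_sep: "A \<inter> B \<subseteq> a i \<inter> b i" if "j \<le> i" for i
    using that unfolding B_def by blast
  have "\<exists>w. E w x \<and> P i w" if "j \<le> i" for i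
  proof -
    obtain K where K: "tight_component V E (a i \<inter> b i) K" "K \<subseteq> b i - a i" using tight by blast
    then have "x \<in> nbhd V E K"
      using in_sep[OF that] x unfolding tight_component_def A_def B_def by blast
    then show ?thesis unfolding P_def nbhd_def using K by blast
  qed
  moreover have "x \<in> V" using x sepAB unfolding A_def B_def is_sep_def by blast
  ultimately obtain w where I: "infinite {i. j \<le> i \<and> P i w}"
    using infinitely_often_same_neighbour[OF assms(1,2)] by blast
  have "{i. j \<le> i \<and> P i w} \<subseteq> {i. w \<in> b i - a i}" unfolding P_def by blast
  then have "infinite {i. w \<in> b i - a i}" by (rule infinite_super) (rule I)
  then have "w \<in> B - A"
    unfolding A_def B_def using frequently_in_difference_in_limit[of a b w, OF chain] by simp
  have "a i \<inter> b i = A \<inter> B" if "j \<le> i" and "P i w" for i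
  proof -
    have "a i \<subseteq> A" "B \<subseteq> b i" unfolding A_def B_def by blast+
    then show ?thesis
      using \<open>P i w\<close> tight_separator_eq_limit[OF assms(1) sepAB] in_sep[OF \<open>j \<le> i\<close>]
        \<open>w \<in> B - A\<close>
      unfolding P_def by blast
  qed
  then have "{i. j \<le> i \<and> P i w} \<subseteq> {i. a i \<inter> b i = A \<inter> B}" by blast
  then show ?thesis unfolding A_def B_def by (rule infinite_super[OF _ I])
qed

lemma tight_chain_limit_separator_infinite:
  fixes a b :: "nat \<Rightarrow> 'a set"
  assumes "graph V E" and "connected_graph V E" and "locally_finite V E"
    and sep: "\<And>i. is_sep V E (a i) (b i)"
    and chain: "\<And>i j. i \<le> j \<Longrightarrow> a i \<subseteq> a j \<and> b j \<subseteq> b i"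
    and inj: "inj (\<lambda>i. (a i, b i))"
    and tight_a: "\<And>i. \<exists>K. tight_component V E (a i \<inter> b i) K \<and> K \<subseteq> a i - b i"
    and tight_b: "\<And>i. \<exists>K. tight_component V E (a i \<inter> b i) K \<and> K \<subseteq> b i - a i"
    and "(\<Inter>i. b i) \<noteq> {}"
  shows "infinite ((\<Union>i. a i) \<inter> (\<Inter>i. b i))"
proof
  let ?A = "\<Union>i. a i" and ?B = "\<Inter>i. b i"
  assume fin: "finite (?A \<inter> ?B)"
  have sepAB: "is_sep V E ?A ?B" by (rule chain_limit_is_sep[OF sep chain])
  obtain K where "tight_component V E (a 0 \<inter> b 0) K" "K \<subseteq> a 0 - b 0" using tight_a by blast
  then have "a 0 - b 0 \<noteq> {}" using component_nonempty unfolding tight_component_def by blast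
  then have "?A - ?B \<noteq> {}" by blast
  then obtain x where x: "x \<in> ?A \<inter> ?B"
    using connected_separator_nonempty[OF assms(2) sepAB] assms(9) by blast
  let ?I = "{i. a i \<inter> b i = ?A \<inter> ?B}"
  have "finite {(C, D). is_sep V E C D \<and> C \<inter> D = ?A \<inter> ?B}"
    using finite_separations_with_separator[OF assms(1-3) fin] x by blast
  moreover have "(\<lambda>i. (a i, b i)) ` ?I \<subseteq> {(C, D). is_sep V E C D \<and> C \<inter> D = ?A \<inter> ?B}"
    using sep by blast
  ultimately have "finite ((\<lambda>i. (a i, b i)) ` ?I)" by (rule finite_subset[rotated])
  then have "finite ?I" using finite_imageD inj_on_subset[OF inj subset_UNIV] by blast
  moreover have "infinite ?I"
    by (rule infinitely_many_chain_separators_eq_limit[OF assms(1,3) sep chain tight_b fin x])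
  ultimately show False by contradiction
qed

theorem mainTheorem18:
  fixes V :: "'a set" and E :: "'a \<Rightarrow> 'a \<Rightarrow> bool"
    and N :: "'a set uprod set" and s :: "nat \<Rightarrow> 'a set \<times> 'a set"
  assumes "graph V E" and "connected_graph V E" and "locally_finite V E"
    and "\<forall>t\<in>N. separation V E t" and "nested_set N"
    and "\<forall>i j. i < j \<longrightarrow> sep_le (s i) (s j) \<and> s i \<noteq> s j"
    and "\<forall>i. Upair (fst (s i)) (snd (s i)) \<in> N"
    and "\<forall>i. tight_sep V E (Upair (fst (s i)) (snd (s i)))"
    and "A = (\<Union>i. fst (s i))" and "B = (\<Inter>i. snd (s i))"
    and "B \<noteq> {}"
    and "distinguishes_set V E N
           {end_pre_tangle V E \<omega> | \<omega>. is_end V E \<omega> \<and> end_in_closure V E \<omega> (A \<inter> B)}"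
  shows "\<exists>!\<omega>. is_end V E \<omega> \<and> end_in_closure V E \<omega> (A \<inter> B)"
proof -
  define a b where "a i = fst (s i)" and "b i = snd (s i)" for i
  have chain: "\<And>i j. i \<le> j \<Longrightarrow> a i \<subseteq> a j \<and> b j \<subseteq> b i" and "inj s"
    using strict_sep_le_chain[OF assms(6)] unfolding a_def b_def by blast+
  then have inj: "inj (\<lambda>i. (a i, b i))" unfolding a_def b_def by simp
  have tight: "is_sep V E (a i) (b i)"
    "\<exists>K. tight_component V E (a i \<inter> b i) K \<and> K \<subseteq> a i - b i"
    "\<exists>K. tight_component V E (a i \<inter> b i) K \<and> K \<subseteq> b i - a i" for i
    using tight_sep_Upair[OF assms(1) assms(8)[rule_format, of i]] unfolding a_def b_def by blast+
  have AB: "A \<inter> B = (\<Union>i. a i) \<inter> (\<Inter>i. b i)" using assms(9,10) unfolding a_def b_def by simp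
  have "infinite (A \<inter> B)" unfolding AB
    using tight_chain_limit_separator_infinite[OF assms(1-3) tight(1) chain inj tight(2,3)] assms(10,11)
    unfolding b_def by blast
  moreover have "A \<inter> B \<subseteq> V" using tight(1) unfolding AB is_sep_def by blast
  ultimately obtain \<omega> where \<omega>: "is_end V E \<omega>" "end_in_closure V E \<omega> (A \<inter> B)"
    using exists_end_in_closure[OF assms(1,3,2)] by blast
  have pairs: "\<exists>C D. Upair C D \<in> N \<and> x \<in> C \<inter> D \<and> y \<in> C \<inter> D"
    if xy: "x \<in> A \<inter> B" "y \<in> A \<inter> B" for x y
  proof -
    obtain i where "x \<in> a i \<inter> b i" "y \<in> a i \<inter> b i"
      using chain_separator_contains_pair[OF chain xy[unfolded AB]] by blast
    moreover have "Upair (a i) (b i) \<in> N" using assms(7) unfolding a_def b_def by blast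
    ultimately show ?thesis by blast
  qed
  show ?thesis
  proof (rule ex1I[of _ \<omega>])
    fix \<omega>' assume "is_end V E \<omega>' \<and> end_in_closure V E \<omega>' (A \<inter> B)"
    then show "\<omega>' = \<omega>" using end_in_closure_unique[OF assms(1,5) pairs assms(12) _ _ \<omega>] by blast
  qed (use \<omega> in blast)
qed

end
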